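(* Let $C\xleftarrow{f}M\xrightarrow{g}D$ be a span of sets, regarded as the linear $(C\mathcal y,D\mathcal y)$-bicomodule $M\mathcal y$. Then the following $(D\mathcal y,C\mathcal y)$-bicomodules are isomorphic: (i) the transpose span $D\xleftarrow{g}M\xrightarrow{f}C$; (ii) the dual $\big((M\mathcal y)^{\dagger r}\big)^\vee$ of the right adjoint of $M\mathcal y$ in $\mathbb C\mathbf{at}^\sharp$; (iii) the left adjoint $\big((M\mathcal y)^\vee\big)^{\dagger l}$ of the dual of $M\mathcal y$ in $\mathbb C\mathbf{at}^\sharp$.
   Context: $\mathbb C\mathbf{at}^\sharp$: bicategory of comonoids in $(\mathbf{Poly},\mathcal y,\triangleleft)$ (small categories), bicomodules, bicomodule maps, horizontal composition $\triangleleft_d$. $C\mathcal y$ is the discrete category on a set $C$. A span $C\leftarrow M\to D$ is the same as a $(C\mathcal y,D\mathcal y)$-bicomodule with linear carrier $M\mathcal y$; its prafunctor $D\text{-}\mathbf{Set}\to C\text{-}\mathbf{Set}$ is $\Sigma_f\Delta_g$. Linear bicomodules between discrete categories are exactly the left adjoints in $\mathbb C\mathbf{at}^\sharp$, with conjunctive right adjoints; $^{\dagger r}$ and $^{\dagger l}$ denote right and left adjoints. The dual $m^\vee:=[m,\bot]_{C\mathcal y,D\mathcal y}$, where $\bot=CD\mathcal y$ is the terminal span and $[-,-]$ the local internal hom, exchanges linear and conjunctive bicomodules: $(\sum_{a\in C}M_a\mathcal y)^\vee\cong\sum_{a\in C}\mathcal y^{M_a}$ and conversely; in prafunctor terms it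 sends $\Sigma_f\Delta_g$ to $\Pi_f\Delta_g$ and vice versa. *)

theory Defs
  imports "HOL-Library.FuncSet"
begin

text \<open>A (C y, D y)-bicomodule is a polynomial whose positions lie over elements of C (left coaction)
and whose directions are labelled by elements of D (right coaction).\<close>

record ('c,'d,'p,'e) bicomod =
  pos  :: "'p set"
  base :: "'p \<Rightarrow> 'c"
  dirs :: "'p \<Rightarrow> 'e set"
  lab  :: "'p \<Rightarrow> 'e \<Rightarrow> 'd"

definition is_bicomod :: "'c set \<Rightarrow> 'd set \<Rightarrow> ('c,'d,'p,'e) bicomod \<Rightarrow> bool" where
  "is_bicomod C D p \<longleftrightarrow>
     (\<forall>i\<in>pos p. base p i \<in> C \<and> (\<forall>e\<in>dirs p i. lab p i e \<in> D))"

type_synonym ('p1,'e1,'p2,'e2) bmap = "('p1 \<Rightarrow> 'p2) \<times> ('p1 \<Rightarrow> 'e2 \<Rightarrow> 'e1)"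

definition is_map :: "('c,'d,'p1,'e1) bicomod \<Rightarrow> ('c,'d,'p2,'e2) bicomod
    \<Rightarrow> ('p1,'e1,'p2,'e2) bmap \<Rightarrow> bool" where
  "is_map p q a \<longleftrightarrow>
     (\<forall>i\<in>pos p. fst a i \<in> pos q \<and> base q (fst a i) = base p i \<and>
        (\<forall>e\<in>dirs q (fst a i). snd a i e \<in> dirs p i \<and> lab p i (snd a i e) = lab q (fst a i) e))"

definition vcomp :: "('p2,'e2,'p3,'e3) bmap \<Rightarrow> ('p1,'e1,'p2,'e2) bmap \<Rightarrow> ('p1,'e1,'p3,'e3) bmap" where
  "vcomp b a = (fst b \<circ> fst a, \<lambda>i e. snd a i (snd b (fst a i) e))"

definition idmap :: "('p,'e,'p,'e) bmap" where
  "idmap = (\<lambda>i. i, \<lambda>i e. e)"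

definition eq2 :: "('c,'d,'p1,'e1) bicomod \<Rightarrow> ('c,'d,'p2,'e2) bicomod
    \<Rightarrow> ('p1,'e1,'p2,'e2) bmap \<Rightarrow> ('p1,'e1,'p2,'e2) bmap \<Rightarrow> bool" where
  "eq2 p q a b \<longleftrightarrow>
     (\<forall>i\<in>pos p. fst a i = fst b i \<and> (\<forall>e\<in>dirs q (fst a i). snd a i e = snd b i e))"

definition bicomod_iso :: "('c,'d,'p1,'e1) bicomod \<Rightarrow> ('c,'d,'p2,'e2) bicomod \<Rightarrow> bool" where
  "bicomod_iso p q \<longleftrightarrow> (\<exists>a b. is_map p q a \<and> is_map q p b \<and>
      eq2 p p (vcomp b a) idmap \<and> eq2 q q (vcomp a b) idmap)"

definition idb :: "'c set \<Rightarrow> ('c,'c,'c,unit) bicomod" where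
  "idb C = \<lparr>pos = C, base = (\<lambda>c. c), dirs = (\<lambda>_. {()}), lab = (\<lambda>c _. c)\<rparr>"

text \<open>Horizontal composition p \<triangleleft>_D q (equalizer of p \<triangleleft> q \<rightrightarrows> p \<triangleleft> D y \<triangleleft> q).\<close>
definition hcomp :: "('c,'d,'p,'e) bicomod \<Rightarrow> ('d,'x,'q,'f) bicomod
    \<Rightarrow> ('c,'x,'p \<times> ('e \<Rightarrow> 'q),'e \<times> 'f) bicomod" where
  "hcomp p q = \<lparr>pos = {(i,\<psi>). i \<in> pos p \<and>
                   \<psi> \<in> (\<Pi>\<^sub>E e\<in>dirs p i. {j\<in>pos q. base q j = lab p i e})},
                base = (\<lambda>(i,\<psi>). base p i),
                dirs = (\<lambda>(i,\<psi>). SIGMA e:dirs p i. dirs q (\<psi> e)),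
                lab = (\<lambda>(i,\<psi>) (e,e'). lab q (\<psi> e) e')\<rparr>"

definition whisk_r :: "('c,'d,'p2,'e2) bicomod \<Rightarrow> ('p1,'e1,'p2,'e2) bmap \<Rightarrow> ('d,'x,'q,'f) bicomod
    \<Rightarrow> ('p1 \<times> ('e1 \<Rightarrow> 'q), 'e1 \<times> 'f, 'p2 \<times> ('e2 \<Rightarrow> 'q), 'e2 \<times> 'f) bmap" where
  "whisk_r p' a q = (\<lambda>(i,\<psi>). (fst a i, restrict (\<lambda>e'. \<psi> (snd a i e')) (dirs p' (fst a i))),
                     \<lambda>(i,\<psi>) (e',e''). (snd a i e', e''))"

definition whisk_l :: "('c,'d,'p,'e) bicomod \<Rightarrow> ('q1,'f1,'q2,'f2) bmap
    \<Rightarrow> ('p \<times> ('e \<Rightarrow> 'q1), 'e \<times> 'f1, 'p \<times> ('e \<Rightarrow> 'q2), 'e \<times> 'f2) bmap" where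
  "whisk_l p b = (\<lambda>(i,\<psi>). (i, restrict (\<lambda>e. fst b (\<psi> e)) (dirs p i)),
                  \<lambda>(i,\<psi>) (e,e''). (e, snd b (\<psi> e) e''))"

definition lunit :: "('c \<times> (unit \<Rightarrow> 'p), unit \<times> 'e, 'p, 'e) bmap" where
  "lunit = (\<lambda>(c,\<psi>). \<psi> (), \<lambda>(c,\<psi>) e. ((), e))"

definition lunit_inv :: "('c,'d,'p,'e) bicomod \<Rightarrow> ('p, 'e, 'c \<times> (unit \<Rightarrow> 'p), unit \<times> 'e) bmap" where
  "lunit_inv p = (\<lambda>i. (base p i, restrict (\<lambda>u. i) {()}), \<lambda>i (u,e). e)"

definition runit :: "('p \<times> ('e \<Rightarrow> 'd), 'e \<times> unit, 'p, 'e) bmap" where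
  "runit = (\<lambda>(i,\<psi>). i, \<lambda>(i,\<psi>) e. (e, ()))"

definition runit_inv :: "('c,'d,'p,'e) bicomod \<Rightarrow> ('p, 'e, 'p \<times> ('e \<Rightarrow> 'd), 'e \<times> unit) bmap" where
  "runit_inv p = (\<lambda>i. (i, restrict (lab p i) (dirs p i)), \<lambda>i (e,u). e)"

definition assoc :: "('c,'d,'p,'e) bicomod \<Rightarrow> ('d,'x,'q,'f) bicomod \<Rightarrow>
   (('p \<times> ('e \<Rightarrow> 'q)) \<times> ('e \<times> 'f \<Rightarrow> 'r), ('e \<times> 'f) \<times> 'g,
    'p \<times> ('e \<Rightarrow> 'q \<times> ('f \<Rightarrow> 'r)), 'e \<times> ('f \<times> 'g)) bmap" where
  "assoc p q = (\<lambda>((i,\<psi>),\<chi>). (i, restrict (\<lambda>e. (\<psi> e, restrict (\<lambda>e'. \<chi> (e,e')) (dirs q (\<psi> e)))) (dirs p i)),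
                \<lambda>((i,\<psi>),\<chi>) (e,(e',e'')). ((e,e'),e''))"

definition assoc_inv :: "('c,'d,'p,'e) bicomod \<Rightarrow> ('d,'x,'q,'f) bicomod \<Rightarrow>
   ('p \<times> ('e \<Rightarrow> 'q \<times> ('f \<Rightarrow> 'r)), 'e \<times> ('f \<times> 'g),
    ('p \<times> ('e \<Rightarrow> 'q)) \<times> ('e \<times> 'f \<Rightarrow> 'r), ('e \<times> 'f) \<times> 'g) bmap" where
  "assoc_inv p q = (\<lambda>(i,\<omega>). ((i, restrict (\<lambda>e. fst (\<omega> e)) (dirs p i)),
                               restrict (\<lambda>(e,e'). snd (\<omega> e) e') (SIGMA e:dirs p i. dirs q (fst (\<omega> e)))),
                    \<lambda>(i,\<omega>) ((e,e'),e''). (e,(e',e'')))"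

definition is_adjunction ::
  "'c set \<Rightarrow> 'd set \<Rightarrow> ('c,'d,'l,'k) bicomod \<Rightarrow> ('d,'c,'r,'s) bicomod
   \<Rightarrow> ('d, unit, 'r \<times> ('s \<Rightarrow> 'l), 's \<times> 'k) bmap
   \<Rightarrow> ('l \<times> ('k \<Rightarrow> 'r), 'k \<times> 's, 'c, unit) bmap \<Rightarrow> bool" where
  "is_adjunction C D L R \<eta> \<epsilon> \<longleftrightarrow>
     is_bicomod C D L \<and> is_bicomod D C R \<and>
     is_map (idb D) (hcomp R L) \<eta> \<and> is_map (hcomp L R) (idb C) \<epsilon> \<and>
     eq2 L L (vcomp lunit (vcomp (whisk_r (idb C) \<epsilon> L) (vcomp (assoc_inv L R)
               (vcomp (whisk_l L \<eta>) (runit_inv L))))) idmap \<and>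
     eq2 R R (vcomp runit (vcomp (whisk_l R \<epsilon>) (vcomp (assoc R L)
               (vcomp (whisk_r (hcomp R L) \<eta> R) (lunit_inv R))))) idmap"

definition is_left_adjoint :: "'c set \<Rightarrow> 'd set \<Rightarrow> ('c,'d,'l,'k) bicomod \<Rightarrow> ('d,'c,'r,'s) bicomod \<Rightarrow> bool" where
  "is_left_adjoint C D L R \<longleftrightarrow> (\<exists>\<eta> \<epsilon>. is_adjunction C D L R \<eta> \<epsilon>)"

text \<open>Local internal hom [p,q] of (C y, D y)-bicomodules (w.r.t. the local Dirichlet-type product
whose directions are fibre products over D), written out explicitly:
 [p,q]_c = \<Pi>_{i \<in> p_c} \<Sigma>_{k \<in> q_c} {label-preserving \<sigma> : q[k] \<rightarrow> p[i]} with directions \<Sigma>_i q[k_i].\<close>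
definition ihom :: "'c set \<Rightarrow> ('c,'d,'p,'e) bicomod \<Rightarrow> ('c,'d,'q,'f) bicomod
    \<Rightarrow> ('c,'d,'c \<times> ('p \<Rightarrow> 'q \<times> ('f \<Rightarrow> 'e)), 'p \<times> 'f) bicomod" where
  "ihom C p q = \<lparr>pos = {(c,\<phi>). c \<in> C \<and>
        \<phi> \<in> (\<Pi>\<^sub>E i\<in>{i\<in>pos p. base p i = c}.
               {(k,\<sigma>). k \<in> pos q \<and> base q k = c \<and>
                  \<sigma> \<in> (\<Pi>\<^sub>E e'\<in>dirs q k. {e\<in>dirs p i. lab p i e = lab q k e'})})},
      base = fst,
      dirs = (\<lambda>(c,\<phi>). {(i,e'). i \<in> pos p \<and> base p i = c \<and> e' \<in> dirs q (fst (\<phi> i))}),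
      lab = (\<lambda>(c,\<phi>) (i,e'). lab q (fst (\<phi> i)) e')\<rparr>"

text \<open>Terminal span C \<leftarrow> C\<times>D \<rightarrow> D as linear bicomodule CD y.\<close>
definition bot :: "'c set \<Rightarrow> 'd set \<Rightarrow> ('c,'d,'c \<times> 'd,unit) bicomod" where
  "bot C D = \<lparr>pos = C \<times> D, base = fst, dirs = (\<lambda>_. {()}), lab = (\<lambda>x _. snd x)\<rparr>"

definition dual :: "'c set \<Rightarrow> 'd set \<Rightarrow> ('c,'d,'p,'e) bicomod
    \<Rightarrow> ('c,'d,'c \<times> ('p \<Rightarrow> ('c \<times> 'd) \<times> (unit \<Rightarrow> 'e)), 'p \<times> unit) bicomod" where
  "dual C D p = ihom C p (bot C D)"

text \<open>Span C \<leftarrow>f M \<rightarrow>g D as linear (C y, D y)-bicomodule M y.\<close>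
definition linb :: "'m set \<Rightarrow> ('m \<Rightarrow> 'c) \<Rightarrow> ('m \<Rightarrow> 'd) \<Rightarrow> ('c,'d,'m,unit) bicomod" where
  "linb M f g = \<lparr>pos = M, base = f, dirs = (\<lambda>_. {()}), lab = (\<lambda>m _. g m)\<rparr>"

end

theory Submission
  imports Defs
begin

text \<open>
An adjunction whose left adjoint is a linear bicomodule \<open>M y\<close> is rigid enough to be read off
pointwise. The unit picks, over every \<open>d \<in> D\<close>, a position of the right adjoint \<open>R\<close> and sends
its directions into the \<open>g\<close>-fibre over \<open>d\<close>; the counit sends an element \<open>m\<close> back to a
direction labelled \<open>f m\<close>, and the triangle identities say exactly that these are mutually
inverse and that \<open>R\<close> has no other positions. So \<open>R\<close> is the conjunctive bicomodule
\<open>\<Sum>\<^sub>d y^(g\<inverse>(d))\<close>, whose dual is the transposed span. Dually, \<open>(M y)\<^sup>\<or>\<close> has exactly one position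
over each \<open>c \<in> C\<close>, with the \<open>f\<close>-fibre over \<open>c\<close> as directions labelled by \<open>g\<close>, and the same
analysis of unit and counit identifies every left adjoint of it with the transposed span.
\<close>

lemmas bicategory_structure_defs = vcomp_def idmap_def idb_def hcomp_def whisk_r_def whisk_l_def
  lunit_def lunit_inv_def runit_def runit_inv_def assoc_def assoc_inv_def

lemma linb_simps [simp]:
  "pos (linb M f g) = M" "base (linb M f g) = f" "dirs (linb M f g) m = {()}" "lab (linb M f g) m u = g m"
  by (simp_all add: linb_def)

text \<open>The conjunctive bicomodule \<open>\<Sum>\<^sub>d\<^sub>\<in>\<^sub>D y^(g\<inverse>(d))\<close> with labels \<open>f\<close>, i.e. the prafunctor \<open>\<Pi>\<^sub>g \<Delta>\<^sub>f\<close>.\<close>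

definition conjb :: "'m set \<Rightarrow> ('m \<Rightarrow> 'c) \<Rightarrow> ('m \<Rightarrow> 'd) \<Rightarrow> 'd set \<Rightarrow> ('d,'c,'d,'m) bicomod" where
  "conjb M f g D = \<lparr>pos = D, base = (\<lambda>d. d), dirs = (\<lambda>d. {m\<in>M. g m = d}), lab = (\<lambda>d m. f m)\<rparr>"

definition span_unit :: "'m set \<Rightarrow> ('m \<Rightarrow> 'd) \<Rightarrow> ('d, unit, 'd \<times> ('m \<Rightarrow> 'm), 'm \<times> unit) bmap" where
  "span_unit M g = (\<lambda>d. (d, restrict (\<lambda>m. m) {m\<in>M. g m = d}), \<lambda>d e. ())"

definition span_counit :: "('m \<Rightarrow> 'c) \<Rightarrow> ('m \<times> (unit \<Rightarrow> 'd), unit \<times> 'm, 'c, unit) bmap" where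
  "span_counit f = (\<lambda>(m,\<chi>). f m, \<lambda>(m,\<chi>) u. ((), m))"

lemma linb_conjb_adjunction:
  assumes "f \<in> M \<rightarrow> C" and "g \<in> M \<rightarrow> D"
  shows "is_adjunction C D (linb M f g) (conjb M f g D) (span_unit M g) (span_counit f)"
  using assms unfolding is_adjunction_def is_bicomod_def is_map_def eq2_def
  by (auto simp: conjb_def span_unit_def span_counit_def bicategory_structure_defs PiE_iff Pi_iff
      split: prod.splits)

lemma base_dual [simp]: "base (dual C D p) = fst"
  by (simp add: dual_def ihom_def)

lemma pos_dual:
  "x \<in> pos (dual C D p) \<longleftrightarrow> fst x \<in> C \<and> snd x \<in> (\<Pi>\<^sub>E i\<in>{i\<in>pos p. base p i = fst x}.
      {(k,\<sigma>). k \<in> C \<times> D \<and> fst k = fst x \<and> \<sigma> \<in> (\<Pi>\<^sub>E u\<in>{()}. {e\<in>dirs p i. lab p i e = snd k})})"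
  by (cases x) (simp add: dual_def ihom_def bot_def)

lemma dirs_dual: "dirs (dual C D p) x = {(i,u). i \<in> pos p \<and> base p i = fst x}"
  by (cases x) (auto simp: dual_def ihom_def bot_def)

lemma lab_dual [simp]: "lab (dual C D p) x (i,u) = snd (fst (snd x i))"
  by (cases x) (simp add: dual_def ihom_def bot_def)

definition dual_linb_pos :: "'m set \<Rightarrow> ('m \<Rightarrow> 'c) \<Rightarrow> ('m \<Rightarrow> 'd) \<Rightarrow> 'c
    \<Rightarrow> 'c \<times> ('m \<Rightarrow> ('c \<times> 'd) \<times> (unit \<Rightarrow> unit))" where
  "dual_linb_pos M f g c = (c, restrict (\<lambda>m. ((c, g m), restrict (\<lambda>_. ()) {()})) {m\<in>M. f m = c})"

lemma fst_dual_linb_pos [simp]: "fst (dual_linb_pos M f g c) = c"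
  by (simp add: dual_linb_pos_def)

lemma pos_dual_linb:
  assumes "g \<in> M \<rightarrow> D"
  shows "x \<in> pos (dual C D (linb M f g)) \<longleftrightarrow> fst x \<in> C \<and> x = dual_linb_pos M f g (fst x)"
proof -
  have unit_fun: "(\<sigma> :: unit \<Rightarrow> unit) = restrict (\<lambda>_. ()) {()}" for \<sigma>
    by (auto simp: fun_eq_iff)
  have "\<phi> \<in> (\<Pi>\<^sub>E i\<in>{i\<in>M. f i = c}. {(k,\<sigma>). k \<in> C \<times> D \<and> fst k = c \<and>
            \<sigma> \<in> (\<Pi>\<^sub>E u\<in>{()}. {e\<in>{()}. g i = snd k})})
        \<longleftrightarrow> \<phi> = snd (dual_linb_pos M f g c)" if "c \<in> C" for c \<phi>
    using assms that unit_fun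
    by (auto simp: PiE_iff Pi_iff dual_linb_pos_def extensional_def fun_eq_iff split: if_splits)
  then show ?thesis
    unfolding pos_dual linb_simps using assms by (cases x) (auto simp: dual_linb_pos_def)
qed

lemma snd_dual_linb_pos [simp]:
  "m \<in> M \<Longrightarrow> f m = c \<Longrightarrow> snd (dual_linb_pos M f g c) m = ((c, g m), restrict (\<lambda>_. ()) {()})"
  by (simp add: dual_linb_pos_def)

definition dual_unit :: "'m set \<Rightarrow> ('m \<Rightarrow> 'c) \<Rightarrow> ('m \<Rightarrow> 'd) \<Rightarrow> ('c, unit,
    ('c \<times> ('m \<Rightarrow> ('c \<times> 'd) \<times> (unit \<Rightarrow> unit))) \<times> ('m \<times> unit \<Rightarrow> 'm), ('m \<times> unit) \<times> unit) bmap" where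
  "dual_unit M f g = (\<lambda>c. (dual_linb_pos M f g c, restrict fst {(m,u). m \<in> M \<and> f m = c}), \<lambda>c e. ())"

definition dual_counit :: "('m \<Rightarrow> 'd) \<Rightarrow> ('m \<times> (unit \<Rightarrow> 'x), unit \<times> ('m \<times> unit), 'd, unit) bmap" where
  "dual_counit g = (\<lambda>(m,\<chi>). g m, \<lambda>(m,\<chi>) u. ((), (m,())))"

lemma linb_dual_adjunction:
  assumes "f \<in> M \<rightarrow> C" and "g \<in> M \<rightarrow> D"
  shows "is_adjunction D C (linb M g f) (dual C D (linb M f g)) (dual_unit M f g) (dual_counit g)"
  using assms unfolding is_adjunction_def is_bicomod_def is_map_def eq2_def
  by (auto simp: pos_dual_linb[OF assms(2)] dirs_dual dual_unit_def dual_counit_def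
      bicategory_structure_defs PiE_iff Pi_iff split: prod.splits)

locale span_right_adjoint =
  fixes C :: "'c set" and D :: "'d set" and M :: "'m set" and f :: "'m \<Rightarrow> 'c" and g :: "'m \<Rightarrow> 'd"
    and R :: "('d,'c,'r,'s) bicomod"
    and \<eta> :: "('d, unit, 'r \<times> ('s \<Rightarrow> 'm), 's \<times> unit) bmap"
    and \<epsilon> :: "('m \<times> (unit \<Rightarrow> 'r), unit \<times> 's, 'c, unit) bmap"
  assumes f_maps: "f \<in> M \<rightarrow> C" and g_maps: "g \<in> M \<rightarrow> D"
    and adjunction: "is_adjunction C D (linb M f g) R \<eta> \<epsilon>"
begin

definition unit_pos :: "'d \<Rightarrow> 'r" where
  "unit_pos d = fst (fst \<eta> d)"

definition unit_elt :: "'d \<Rightarrow> 's \<Rightarrow> 'm" where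
  "unit_elt d s = snd (fst \<eta> d) s"

definition counit_dir :: "'m \<Rightarrow> 'r \<Rightarrow> 's" where
  "counit_dir m r = snd (snd \<epsilon> (m, restrict (\<lambda>_. r) {()}) ())"

lemma unit_is_map: "is_map (idb D) (hcomp R (linb M f g)) \<eta>"
  and counit_is_map: "is_map (hcomp (linb M f g) R) (idb C) \<epsilon>"
  using adjunction by (simp_all add: is_adjunction_def)

lemma unit_pos: "d \<in> D \<Longrightarrow> unit_pos d \<in> pos R" "d \<in> D \<Longrightarrow> base R (unit_pos d) = d"
  using unit_is_map by (auto simp: is_map_def idb_def hcomp_def unit_pos_def split_beta)

lemma unit_elt:
  assumes "d \<in> D" and "s \<in> dirs R (unit_pos d)"
  shows "unit_elt d s \<in> M" "f (unit_elt d s) = lab R (unit_pos d) s" "g (unit_elt d s) = d"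
proof -
  have "fst \<eta> d \<in> pos (hcomp R (linb M f g))"
    using unit_is_map assms by (auto simp: is_map_def idb_def)
  then show "unit_elt d s \<in> M" "f (unit_elt d s) = lab R (unit_pos d) s"
    using assms by (auto simp: hcomp_def unit_pos_def unit_elt_def PiE_iff split_beta)
  have "(s,()) \<in> dirs (hcomp R (linb M f g)) (fst \<eta> d)"
    using assms by (auto simp: hcomp_def unit_pos_def split_beta)
  then show "g (unit_elt d s) = d"
    using unit_is_map assms
    by (auto simp: is_map_def idb_def hcomp_def unit_pos_def unit_elt_def split_beta)
qed

lemma counit_dir:
  assumes "m \<in> M" and "r \<in> pos R" and "base R r = g m"
  shows "counit_dir m r \<in> dirs R r" "lab R r (counit_dir m r) = f m"
proof -
  let ?i = "(m, restrict (\<lambda>_. r) {()})"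
  have i: "?i \<in> pos (hcomp (linb M f g) R)"
    using assms by (auto simp: hcomp_def)
  then have "fst \<epsilon> ?i = f m"
    using counit_is_map by (auto simp: is_map_def idb_def hcomp_def)
  moreover have "snd \<epsilon> ?i () \<in> dirs (hcomp (linb M f g) R) ?i"
      "lab (hcomp (linb M f g) R) ?i (snd \<epsilon> ?i ()) = lab (idb C) (fst \<epsilon> ?i) ()"
    using counit_is_map i by (auto simp: is_map_def idb_def)
  ultimately show "counit_dir m r \<in> dirs R r" "lab R r (counit_dir m r) = f m"
    by (auto simp: hcomp_def counit_dir_def idb_def split_beta)
qed

lemma left_triangle:
  assumes m: "m \<in> M"
  shows "unit_elt (g m) (counit_dir m (unit_pos (g m))) = m"
proof -
  have "eq2 (linb M f g) (linb M f g) (vcomp lunit (vcomp (whisk_r (idb C) \<epsilon> (linb M f g))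
      (vcomp (assoc_inv (linb M f g) R) (vcomp (whisk_l (linb M f g) \<eta>) (runit_inv (linb M f g))))))
      idmap"
    using adjunction by (simp add: is_adjunction_def)
  then have "fst (vcomp lunit (vcomp (whisk_r (idb C) \<epsilon> (linb M f g))
      (vcomp (assoc_inv (linb M f g) R) (vcomp (whisk_l (linb M f g) \<eta>) (runit_inv (linb M f g))))))
      m = m"
    using m by (simp add: eq2_def idmap_def)
  moreover have "counit_dir m (unit_pos (g m)) \<in> dirs R (unit_pos (g m))"
    using m g_maps by (auto intro: counit_dir unit_pos)
  ultimately show ?thesis
    by (simp add: bicategory_structure_defs split_beta counit_dir_def unit_pos_def unit_elt_def
        mem_Times_iff)
qed

lemma right_triangle:
  assumes r: "r \<in> pos R"
  shows "unit_pos (base R r) = r"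
    and "s \<in> dirs R r \<Longrightarrow> counit_dir (unit_elt (base R r) s) r = s"
proof -
  have "eq2 R R (vcomp runit (vcomp (whisk_l R \<epsilon>) (vcomp (assoc R (linb M f g))
      (vcomp (whisk_r (hcomp R (linb M f g)) \<eta> R) (lunit_inv R))))) idmap"
    using adjunction by (simp add: is_adjunction_def)
  then have fst: "fst (vcomp runit (vcomp (whisk_l R \<epsilon>) (vcomp (assoc R (linb M f g))
      (vcomp (whisk_r (hcomp R (linb M f g)) \<eta> R) (lunit_inv R))))) r = r"
    and snd: "\<And>s. s \<in> dirs R r \<Longrightarrow> snd (vcomp runit (vcomp (whisk_l R \<epsilon>) (vcomp (assoc R (linb M f g))
      (vcomp (whisk_r (hcomp R (linb M f g)) \<eta> R) (lunit_inv R))))) r s = s"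
    using r by (simp_all add: eq2_def idmap_def)
  from fst show pos: "unit_pos (base R r) = r"
    by (simp add: bicategory_structure_defs split_beta unit_pos_def)
  assume "s \<in> dirs R r"
  with snd pos show "counit_dir (unit_elt (base R r) s) r = s"
    by (simp add: bicategory_structure_defs split_beta unit_pos_def unit_elt_def counit_dir_def)
qed

lemma eq_unit_pos: "r \<in> pos R \<Longrightarrow> base R r = d \<Longrightarrow> r = unit_pos d"
  using right_triangle(1) by metis

lemma dual_pos_at_unit_pos:
  assumes "(d,\<phi>) \<in> pos (dual D C R)"
  shows "fst (fst (\<phi> (unit_pos d))) = d" "snd (\<phi> (unit_pos d)) () \<in> dirs R (unit_pos d)"
    "lab R (unit_pos d) (snd (\<phi> (unit_pos d)) ()) = snd (fst (\<phi> (unit_pos d)))"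
proof -
  have d: "d \<in> D" and \<phi>: "\<phi> \<in> (\<Pi>\<^sub>E r\<in>{r\<in>pos R. base R r = d}. {(k,\<sigma>). k \<in> D \<times> C \<and> fst k = d \<and>
      \<sigma> \<in> (\<Pi>\<^sub>E u\<in>{()}. {e\<in>dirs R r. lab R r e = snd k})})"
    using assms by (simp_all add: pos_dual)
  have "\<phi> (unit_pos d) \<in> {(k,\<sigma>). k \<in> D \<times> C \<and> fst k = d \<and>
      \<sigma> \<in> (\<Pi>\<^sub>E u\<in>{()}. {e\<in>dirs R (unit_pos d). lab R (unit_pos d) e = snd k})}"
    by (rule PiE_mem[OF \<phi>]) (simp add: unit_pos d)
  then show "fst (fst (\<phi> (unit_pos d))) = d" "snd (\<phi> (unit_pos d)) () \<in> dirs R (unit_pos d)"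
    "lab R (unit_pos d) (snd (\<phi> (unit_pos d)) ()) = snd (fst (\<phi> (unit_pos d)))"
    by (auto simp: PiE_iff split_beta)
qed

definition to_dual :: "('m, unit, 'd \<times> ('r \<Rightarrow> ('d \<times> 'c) \<times> (unit \<Rightarrow> 's)), 'r \<times> unit) bmap" where
  "to_dual = (\<lambda>m. (g m, restrict (\<lambda>r. ((g m, f m), restrict (\<lambda>_. counit_dir m r) {()}))
                                {r\<in>pos R. base R r = g m}), \<lambda>m e. ())"

definition from_dual :: "('d \<times> ('r \<Rightarrow> ('d \<times> 'c) \<times> (unit \<Rightarrow> 's)), 'r \<times> unit, 'm, unit) bmap" where
  "from_dual = (\<lambda>(d,\<phi>). unit_elt d (snd (\<phi> (unit_pos d)) ()), \<lambda>(d,\<phi>) u. (unit_pos d, ()))"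

lemma to_dual_is_map: "is_map (linb M g f) (dual D C R) to_dual"
  unfolding is_map_def
proof (intro ballI conjI)
  fix m assume "m \<in> pos (linb M g f)"
  then have m: "m \<in> M" by simp
  show "fst to_dual m \<in> pos (dual D C R)"
    unfolding pos_dual to_dual_def using m f_maps g_maps counit_dir[OF m] by (auto simp: PiE_iff)
  fix e assume "e \<in> dirs (dual D C R) (fst to_dual m)"
  then show "lab (linb M g f) m (snd to_dual m e) = lab (dual D C R) (fst to_dual m) e"
    by (auto simp: to_dual_def dirs_dual)
qed (simp_all add: to_dual_def)

lemma from_dual_is_map: "is_map (dual D C R) (linb M g f) from_dual"
  unfolding is_map_def
proof (intro ballI conjI)
  fix x assume x: "x \<in> pos (dual D C R)"
  obtain d \<phi> where x_eq: "x = (d,\<phi>)" by (cases x)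
  have d: "d \<in> D" using x by (simp add: pos_dual x_eq)
  note \<phi> = dual_pos_at_unit_pos[OF x[unfolded x_eq]]
  show "fst from_dual x \<in> pos (linb M g f)" "base (linb M g f) (fst from_dual x) = base (dual D C R) x"
    using unit_elt[OF d \<phi>(2)] by (simp_all add: from_dual_def x_eq)
  fix e
  show "snd from_dual x e \<in> dirs (dual D C R) x"
    using unit_pos[OF d] by (simp add: from_dual_def x_eq dirs_dual)
  show "lab (dual D C R) x (snd from_dual x e) = lab (linb M g f) (fst from_dual x) e"
    using unit_elt[OF d \<phi>(2)] \<phi> by (simp add: from_dual_def x_eq)
qed

lemma from_dual_to_dual: "m \<in> M \<Longrightarrow> fst from_dual (fst to_dual m) = m"
  using left_triangle g_maps unit_pos by (auto simp: from_dual_def to_dual_def)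

lemma to_dual_from_dual:
  assumes x: "x \<in> pos (dual D C R)"
  shows "fst to_dual (fst from_dual x) = x"
proof -
  obtain d \<phi> where x_eq: "x = (d,\<phi>)" by (cases x)
  have d: "d \<in> D" using x by (simp add: pos_dual x_eq)
  note \<phi> = dual_pos_at_unit_pos[OF x[unfolded x_eq]]
  define m where "m = unit_elt d (snd (\<phi> (unit_pos d)) ())"
  have gm: "g m = d" and fm: "f m = snd (fst (\<phi> (unit_pos d)))"
    using unit_elt[OF d \<phi>(2)] \<phi>(3) by (auto simp: m_def)
  have "counit_dir m (unit_pos d) = snd (\<phi> (unit_pos d)) ()"
    using right_triangle(2)[OF unit_pos(1)[OF d] \<phi>(2)] unit_pos(2)[OF d] by (simp add: m_def)
  then have "\<phi> r = ((g m, f m), restrict (\<lambda>_. counit_dir m r) {()})"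
    if "r \<in> pos R" "base R r = g m" for r
    using that gm fm \<phi>(1) eq_unit_pos x
    by (auto simp: pos_dual x_eq PiE_iff fun_eq_iff)
  moreover have "\<phi> \<in> extensional {r\<in>pos R. base R r = g m}"
    using x gm by (simp add: pos_dual x_eq PiE_iff)
  ultimately have "restrict (\<lambda>r. ((g m, f m), restrict (\<lambda>_. counit_dir m r) {()}))
      {r\<in>pos R. base R r = g m} = \<phi>"
    by (force simp: extensional_def)
  then show ?thesis
    by (simp add: to_dual_def from_dual_def x_eq gm m_def[symmetric])
qed

lemma linb_transpose_iso_dual: "bicomod_iso (linb M g f) (dual D C R)"
  unfolding bicomod_iso_def
proof (intro exI conjI)
  show "eq2 (linb M g f) (linb M g f) (vcomp from_dual to_dual) idmap"
    using from_dual_to_dual by (simp add: eq2_def vcomp_def idmap_def to_dual_def)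
  show "eq2 (dual D C R) (dual D C R) (vcomp to_dual from_dual) idmap"
    using to_dual_from_dual eq_unit_pos
    by (auto simp: eq2_def vcomp_def idmap_def dirs_dual to_dual_def from_dual_def)
qed (fact to_dual_is_map from_dual_is_map)+

end

locale dual_span_left_adjoint =
  fixes C :: "'c set" and D :: "'d set" and M :: "'m set" and f :: "'m \<Rightarrow> 'c" and g :: "'m \<Rightarrow> 'd"
    and L :: "('d,'c,'l,'k) bicomod"
    and \<eta> :: "('c, unit, ('c \<times> ('m \<Rightarrow> ('c \<times> 'd) \<times> (unit \<Rightarrow> unit))) \<times> ('m \<times> unit \<Rightarrow> 'l),
               ('m \<times> unit) \<times> 'k) bmap"
    and \<epsilon> :: "('l \<times> ('k \<Rightarrow> 'c \<times> ('m \<Rightarrow> ('c \<times> 'd) \<times> (unit \<Rightarrow> unit))), 'k \<times> ('m \<times> unit), 'd, unit) bmap"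
  assumes f_maps: "f \<in> M \<rightarrow> C" and g_maps: "g \<in> M \<rightarrow> D"
    and adjunction: "is_adjunction D C L (dual C D (linb M f g)) \<eta> \<epsilon>"
begin

abbreviation K :: "('c,'d,'c \<times> ('m \<Rightarrow> ('c \<times> 'd) \<times> (unit \<Rightarrow> unit)),'m \<times> unit) bicomod" where
  "K \<equiv> dual C D (linb M f g)"

definition unit_pos :: "'c \<Rightarrow> 'm \<Rightarrow> 'l" where
  "unit_pos c m = snd (fst \<eta> c) (m,())"

definition counit_arg :: "'l \<Rightarrow> 'k \<Rightarrow> 'c \<times> ('m \<Rightarrow> ('c \<times> 'd) \<times> (unit \<Rightarrow> unit))" where
  "counit_arg l = restrict (\<lambda>e. fst (fst \<eta> (lab L l e))) (dirs L l)"

definition counit_dir :: "'l \<Rightarrow> 'k \<times> ('m \<times> unit)" where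
  "counit_dir l = snd \<epsilon> (l, counit_arg l) ()"

lemma unit_is_map: "is_map (idb C) (hcomp K L) \<eta>"
  and counit_is_map: "is_map (hcomp L K) (idb D) \<epsilon>"
  and L_bicomod: "is_bicomod D C L"
  using adjunction by (simp_all add: is_adjunction_def)

lemma pos_K: "x \<in> pos K \<longleftrightarrow> fst x \<in> C \<and> x = dual_linb_pos M f g (fst x)"
  by (rule pos_dual_linb[OF g_maps])

lemma fst_unit: "c \<in> C \<Longrightarrow> fst (fst \<eta> c) = dual_linb_pos M f g c"
  using unit_is_map pos_K by (auto simp: is_map_def idb_def hcomp_def split_beta)

lemma unit_pos:
  assumes "c \<in> C" "m \<in> M" "f m = c"
  shows "unit_pos c m \<in> pos L" "base L (unit_pos c m) = g m"
proof -
  have "fst \<eta> c \<in> pos (hcomp K L)"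
    using unit_is_map assms by (auto simp: is_map_def idb_def)
  then have "snd (fst \<eta> c) \<in> (\<Pi>\<^sub>E s\<in>dirs K (dual_linb_pos M f g c).
      {l\<in>pos L. base L l = lab K (dual_linb_pos M f g c) s})"
    using fst_unit[OF assms(1)] by (auto simp: hcomp_def split_beta)
  then have "unit_pos c m \<in> {l\<in>pos L. base L l = lab K (dual_linb_pos M f g c) (m,())}"
    unfolding unit_pos_def by (rule PiE_mem) (use assms in \<open>simp add: dirs_dual\<close>)
  then show "unit_pos c m \<in> pos L" "base L (unit_pos c m) = g m"
    using assms by simp_all
qed

lemma lab_unit_pos:
  assumes "c \<in> C" "m \<in> M" "f m = c" "e \<in> dirs L (unit_pos c m)"
  shows "lab L (unit_pos c m) e = c"
proof -
  have "((m,()),e) \<in> dirs (hcomp K L) (fst \<eta> c)"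
    using assms fst_unit[OF assms(1)] by (auto simp: hcomp_def split_beta unit_pos_def dirs_dual)
  then have "lab (idb C) c () = lab (hcomp K L) (fst \<eta> c) ((m,()),e)"
    using unit_is_map assms(1) unfolding is_map_def by (simp add: idb_def)
  then show ?thesis
    by (simp add: idb_def hcomp_def split_beta unit_pos_def)
qed

lemma counit_dir:
  assumes l: "l \<in> pos L"
  shows "counit_dir l \<in> (SIGMA e:dirs L l. dirs K (dual_linb_pos M f g (lab L l e)))"
    "fst (counit_dir l) \<in> dirs L l" "fst (snd (counit_dir l)) \<in> M" "f (fst (snd (counit_dir l))) = lab L l (fst (counit_dir l))"
    "g (fst (snd (counit_dir l))) = base L l"
proof -
  have lab_C: "e \<in> dirs L l \<Longrightarrow> lab L l e \<in> C" for e
    using L_bicomod l by (simp add: is_bicomod_def)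
  have "(l, counit_arg l) \<in> pos (hcomp L K)"
    using l lab_C fst_unit pos_K by (auto simp: hcomp_def counit_arg_def)
  then have "fst \<epsilon> (l, counit_arg l) = base L l"
      "counit_dir l \<in> dirs (hcomp L K) (l, counit_arg l)"
      "lab (hcomp L K) (l, counit_arg l) (counit_dir l) = lab (idb D) (fst \<epsilon> (l, counit_arg l)) ()"
    using counit_is_map by (auto simp: is_map_def idb_def hcomp_def counit_dir_def)
  then show "counit_dir l \<in> (SIGMA e:dirs L l. dirs K (dual_linb_pos M f g (lab L l e)))"
    "fst (counit_dir l) \<in> dirs L l" "fst (snd (counit_dir l)) \<in> M" "f (fst (snd (counit_dir l))) = lab L l (fst (counit_dir l))"
    "g (fst (snd (counit_dir l))) = base L l"
    using lab_C fst_unit by (auto simp: hcomp_def idb_def counit_arg_def dirs_dual split_beta)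
qed

lemma left_triangle:
  assumes l: "l \<in> pos L"
  shows "unit_pos (lab L l (fst (counit_dir l))) (fst (snd (counit_dir l))) = l"
    and "e \<in> dirs L l \<Longrightarrow> fst (counit_dir l) = e"
proof -
  have "eq2 L L (vcomp lunit (vcomp (whisk_r (idb D) \<epsilon> L) (vcomp (assoc_inv L K)
      (vcomp (whisk_l L \<eta>) (runit_inv L))))) idmap"
    using adjunction by (simp add: is_adjunction_def)
  then have fst: "fst (vcomp lunit (vcomp (whisk_r (idb D) \<epsilon> L) (vcomp (assoc_inv L K)
      (vcomp (whisk_l L \<eta>) (runit_inv L))))) l = l"
    and snd: "\<And>e. e \<in> dirs L l \<Longrightarrow> snd (vcomp lunit (vcomp (whisk_r (idb D) \<epsilon> L) (vcomp (assoc_inv L K)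
      (vcomp (whisk_l L \<eta>) (runit_inv L))))) l e = e"
    using l by (simp_all add: eq2_def idmap_def idb_def vcomp_def lunit_def)
  have unit_eq: "(fst p, ()) = p" for p :: "'m \<times> unit"
    by (cases p) simp
  have "counit_dir l \<in> (SIGMA e:dirs L l. dirs K (fst (restrict (\<lambda>e. fst \<eta> (lab L l e)) (dirs L l) e)))"
    using counit_dir(1)[OF l] L_bicomod l fst_unit by (auto simp: is_bicomod_def)
  with fst counit_dir[OF l]
  show "unit_pos (lab L l (fst (counit_dir l))) (fst (snd (counit_dir l))) = l"
    by (simp add: bicategory_structure_defs split_beta unit_pos_def counit_dir_def counit_arg_def
        unit_eq cong: restrict_cong)
  assume "e \<in> dirs L l"
  with snd show "fst (counit_dir l) = e"
    by (simp add: bicategory_structure_defs split_beta counit_dir_def counit_arg_def cong: restrict_cong)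
qed

lemma right_triangle:
  assumes c: "c \<in> C" and m: "m \<in> M" "f m = c"
  shows "fst (snd (counit_dir (unit_pos c m))) = m"
proof -
  have dir: "(m,()) \<in> dirs K (dual_linb_pos M f g c)"
    using m by (simp add: dirs_dual)
  have "eq2 K K (vcomp runit (vcomp (whisk_l K \<epsilon>) (vcomp (assoc K L)
      (vcomp (whisk_r (hcomp K L) \<eta> K) (lunit_inv K))))) idmap"
    using adjunction by (simp add: is_adjunction_def)
  then have snd: "snd (vcomp runit (vcomp (whisk_l K \<epsilon>) (vcomp (assoc K L)
      (vcomp (whisk_r (hcomp K L) \<eta> K) (lunit_inv K))))) (dual_linb_pos M f g c) (m,()) = (m,())"
    using pos_K[of "dual_linb_pos M f g c"] c dir
    by (auto simp: eq2_def idmap_def vcomp_def runit_def whisk_l_def assoc_def whisk_r_def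
        lunit_inv_def split_beta)
  have "(\<lambda>e\<in>dirs L (unit_pos c m). if ((m,()), e) \<in> dirs (hcomp K L) (fst \<eta> c)
          then dual_linb_pos M f g c else undefined) = counit_arg (unit_pos c m)"
    unfolding counit_arg_def
  proof (rule restrict_ext)
    fix e assume e: "e \<in> dirs L (unit_pos c m)"
    then have "((m,()), e) \<in> dirs (hcomp K L) (fst \<eta> c)"
      using fst_unit[OF c] m by (auto simp: hcomp_def split_beta unit_pos_def dirs_dual)
    then show "(if ((m,()), e) \<in> dirs (hcomp K L) (fst \<eta> c) then dual_linb_pos M f g c else undefined)
        = fst (fst \<eta> (lab L (unit_pos c m) e))"
      using lab_unit_pos[OF c m e] fst_unit[OF c] by simp
  qed
  with snd dir fst_unit[OF c] show ?thesis
    by (simp add: bicategory_structure_defs split_beta counit_dir_def unit_pos_def)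
qed

definition to_L :: "('m, unit, 'l, 'k) bmap" where
  "to_L = (\<lambda>m. unit_pos (f m) m, \<lambda>m e. ())"

definition from_L :: "('l, 'k, 'm, unit) bmap" where
  "from_L = (\<lambda>l. fst (snd (counit_dir l)), \<lambda>l u. fst (counit_dir l))"

lemma linb_transpose_iso: "bicomod_iso (linb M g f) L"
  unfolding bicomod_iso_def
proof (intro exI conjI)
  show "is_map (linb M g f) L to_L"
    using f_maps unit_pos lab_unit_pos by (auto simp: is_map_def to_L_def Pi_iff)
  show "is_map L (linb M g f) from_L"
    using counit_dir by (auto simp: is_map_def from_L_def)
  show "eq2 (linb M g f) (linb M g f) (vcomp from_L to_L) idmap"
    using f_maps right_triangle by (auto simp: Pi_iff eq2_def vcomp_def idmap_def to_L_def from_L_def)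
  show "eq2 L L (vcomp to_L from_L) idmap"
    using left_triangle counit_dir by (auto simp: eq2_def vcomp_def idmap_def to_L_def from_L_def)
qed

end


lemma right_adjoint_linb_dual_iso:
  assumes "f \<in> M \<rightarrow> C" and "g \<in> M \<rightarrow> D" and "is_left_adjoint C D (linb M f g) R"
  shows "bicomod_iso (linb M g f) (dual D C R)"
proof -
  from assms(3) obtain \<eta> \<epsilon> where "is_adjunction C D (linb M f g) R \<eta> \<epsilon>"
    by (auto simp: is_left_adjoint_def)
  with assms(1,2) interpret span_right_adjoint C D M f g R \<eta> \<epsilon>
    by unfold_locales
  show ?thesis
    by (fact linb_transpose_iso_dual)
qed

lemma left_adjoint_dual_linb_iso:
  assumes "f \<in> M \<rightarrow> C" and "g \<in> M \<rightarrow> D" and "is_left_adjoint D C L (dual C D (linb M f g))"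
  shows "bicomod_iso (linb M g f) L"
proof -
  from assms(3) obtain \<eta> \<epsilon> where "is_adjunction D C L (dual C D (linb M f g)) \<eta> \<epsilon>"
    by (auto simp: is_left_adjoint_def)
  with assms(1,2) interpret dual_span_left_adjoint C D M f g L \<eta> \<epsilon>
    by unfold_locales
  show ?thesis
    by (fact linb_transpose_iso)
qed

theorem corollary2p53:
  fixes C :: "'c set" and D :: "'d set" and M :: "'m set"
    and f :: "'m \<Rightarrow> 'c" and g :: "'m \<Rightarrow> 'd"
  assumes "f \<in> M \<rightarrow> C" and "g \<in> M \<rightarrow> D"
  shows "(\<exists>R :: ('d,'c,'d,'m) bicomod. is_left_adjoint C D (linb M f g) R)
    \<and> (\<forall>R :: ('d,'c,'r,'s) bicomod. is_left_adjoint C D (linb M f g) R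
          \<longrightarrow> bicomod_iso (linb M g f) (dual D C R))
    \<and> (\<exists>L :: ('d,'c,'m,unit) bicomod. is_left_adjoint D C L (dual C D (linb M f g)))
    \<and> (\<forall>L :: ('d,'c,'l,'k) bicomod. is_left_adjoint D C L (dual C D (linb M f g))
          \<longrightarrow> bicomod_iso (linb M g f) L)"
proof (intro conjI allI impI)
  show "\<exists>R :: ('d,'c,'d,'m) bicomod. is_left_adjoint C D (linb M f g) R"
    using linb_conjb_adjunction[OF assms] unfolding is_left_adjoint_def by blast
  show "\<exists>L :: ('d,'c,'m,unit) bicomod. is_left_adjoint D C L (dual C D (linb M f g))"
    using linb_dual_adjunction[OF assms] unfolding is_left_adjoint_def by blast
qed (fact right_adjoint_linb_dual_iso[OF assms] left_adjoint_dual_linb_iso[OF assms])+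

end
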